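(* Let $S=(P,L)$ be a $(2,t)$-generalized quadrangle and let $(R,\psi)$ be a representation of $S$. Then $R$ is an elementary abelian $2$-group.
   Context: A $(2,t)$-generalized quadrangle is a partial linear space (two distinct points on at most one line) in which every line has exactly $3$ points, every point lies on exactly $t+1$ lines, no point is collinear with all points, and for every point $x$ and line $\ell$ with $x\notin\ell$, $x$ is collinear with exactly one point of $\ell$. A representation $(R,\psi)$ of $S$ is a group $R$ together with a map $\psi$ assigning to each point $x$ a subgroup $\psi(x)=\langle r_x\rangle$ of order $2$, such that $R$ is generated by $\{r_x:x\in P\}$ and, for every line $\{x,y,z\}$, $\{1,r_x,r_y,r_z\}$ is a Klein four subgroup of $R$. *)

theory Defs
  imports "HOL-Algebra.Algebra"
begin

definition collinear_pts :: "'p set set \<Rightarrow> 'p \<Rightarrow> 'p \<Rightarrow> bool" where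
  "collinear_pts L x y \<longleftrightarrow> (\<exists>l\<in>L. x \<in> l \<and> y \<in> l)"

definition gen_quadrangle_2t :: "'p set \<Rightarrow> 'p set set \<Rightarrow> nat \<Rightarrow> bool" where
  "gen_quadrangle_2t P L t \<longleftrightarrow>
     (\<forall>l\<in>L. l \<subseteq> P \<and> card l = 3) \<and>
     (\<forall>x\<in>P. \<forall>y\<in>P. x \<noteq> y \<longrightarrow>
        (\<forall>l\<in>L. \<forall>m\<in>L. x \<in> l \<and> y \<in> l \<and> x \<in> m \<and> y \<in> m \<longrightarrow> l = m)) \<and>
     (\<forall>x\<in>P. finite {l\<in>L. x \<in> l} \<and> card {l\<in>L. x \<in> l} = t + 1) \<and>
     (\<forall>x\<in>P. \<exists>y\<in>P. \<not> collinear_pts L x y) \<and>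
     (\<forall>x\<in>P. \<forall>l\<in>L. x \<notin> l \<longrightarrow> (\<exists>!y. y \<in> l \<and> collinear_pts L x y))"

definition klein_four_subgroup :: "('g, 'b) monoid_scheme \<Rightarrow> 'g set \<Rightarrow> bool" where
  "klein_four_subgroup R H \<longleftrightarrow>
     subgroup H R \<and> card H = 4 \<and> (\<forall>h\<in>H. h \<otimes>\<^bsub>R\<^esub> h = \<one>\<^bsub>R\<^esub>)"

text \<open>A representation: r x generates psi(x) = <r x>, a subgroup of order 2.\<close>
definition representation :: "'p set \<Rightarrow> 'p set set \<Rightarrow> ('g, 'b) monoid_scheme \<Rightarrow> ('p \<Rightarrow> 'g) \<Rightarrow> bool" where
  "representation P L R r \<longleftrightarrow>
     group R \<and>
     (\<forall>x\<in>P. r x \<in> carrier R \<and> group.ord R (r x) = 2) \<and>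
     generate R (r ` P) = carrier R \<and>
     (\<forall>x y z. {x, y, z} \<in> L \<longrightarrow>
        klein_four_subgroup R {\<one>\<^bsub>R\<^esub>, r x, r y, r z})"

definition elementary_abelian_2_group :: "('g, 'b) monoid_scheme \<Rightarrow> bool" where
  "elementary_abelian_2_group R \<longleftrightarrow>
     comm_group R \<and> (\<forall>g\<in>carrier R. g \<otimes>\<^bsub>R\<^esub> g = \<one>\<^bsub>R\<^esub>)"

end

(* The three involutions r x, r y, r z of a line {x, y, z} form a Klein four-group, so they
   commute pairwise and each is the product of the other two.  This already settles collinear
   points.  For non-collinear x and y, the quadrangle axiom produces a 3 x 3 grid: lines
   {x, a, b}, {x, a', b'} through x, lines {y, a, e}, {y, a', e'} through y, and lines
   {b', e, z}, {b, e', z} through a common ninth point z.  Writing r b = r x r a,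
   r b' = r x r a', r e = r a r y, r e' = r a' r y, the two expressions for r z force r a and r a'
   to commute, and then the commutation of r b with r e' forces r x r y = r y r x.  So R is
   generated by pairwise commuting involutions, hence elementary abelian. *)

theory Submission
  imports Defs
begin

definition centralizer :: "('g, 'b) monoid_scheme \<Rightarrow> 'g set \<Rightarrow> 'g set" where
  "centralizer G S = {g \<in> carrier G. \<forall>s\<in>S. g \<otimes>\<^bsub>G\<^esub> s = s \<otimes>\<^bsub>G\<^esub> g}"

context group
begin

lemma subgroup_centralizer:
  assumes "S \<subseteq> carrier G" shows "subgroup (centralizer G S) G"
proof (rule subgroupI)
  show "centralizer G S \<subseteq> carrier G"
    by (auto simp: centralizer_def)
  show "centralizer G S \<noteq> {}"
    using assms by (force simp: centralizer_def)
  show "inv g \<in> centralizer G S" if "g \<in> centralizer G S" for g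
  proof -
    have "inv g \<otimes> s = s \<otimes> inv g" if "s \<in> carrier G" "g \<in> carrier G" "g \<otimes> s = s \<otimes> g" for s
    proof -
      have "inv g \<otimes> s = inv g \<otimes> (s \<otimes> g) \<otimes> inv g"
        using that by (simp add: m_assoc)
      also have "\<dots> = inv g \<otimes> (g \<otimes> s) \<otimes> inv g"
        using that(3) by simp
      also have "\<dots> = s \<otimes> inv g"
        using that(1,2) by (simp flip: m_assoc)
      finally show ?thesis .
    qed
    then show ?thesis
      using that assms by (auto simp: centralizer_def)
  qed
  show "g \<otimes> h \<in> centralizer G S" if "g \<in> centralizer G S" "h \<in> centralizer G S" for g h
  proof -
    have "g \<otimes> h \<otimes> s = s \<otimes> (g \<otimes> h)"
      if "s \<in> carrier G" "g \<in> carrier G" "h \<in> carrier G" "g \<otimes> s = s \<otimes> g" "h \<otimes> s = s \<otimes> h" for s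
    proof -
      have "g \<otimes> h \<otimes> s = g \<otimes> (s \<otimes> h)"
        using that by (simp add: m_assoc)
      also have "\<dots> = s \<otimes> (g \<otimes> h)"
        using that(1-4) by (simp flip: m_assoc)
      finally show ?thesis .
    qed
    then show ?thesis
      using that assms by (auto simp: centralizer_def)
  qed
qed

lemma comm_group_if_generated_by_commuting:
  assumes "generate G S = carrier G" "S \<subseteq> carrier G"
    and "\<And>x y. \<lbrakk>x \<in> S; y \<in> S\<rbrakk> \<Longrightarrow> x \<otimes> y = y \<otimes> x"
  shows "comm_group G"
proof -
  have "S \<subseteq> centralizer G S"
    using assms(2,3) by (auto simp: centralizer_def)
  then have "generate G S \<subseteq> centralizer G S"
    by (rule generate_subgroup_incl[OF _ subgroup_centralizer[OF assms(2)]])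
  then have "S \<subseteq> centralizer G (carrier G)"
    using assms(1,2) by (auto simp: centralizer_def)
  then have "generate G S \<subseteq> centralizer G (carrier G)"
    by (rule generate_subgroup_incl[OF _ subgroup_centralizer[OF subset_refl]])
  then show ?thesis
    using assms(1) by (intro group_comm_groupI) (auto simp: centralizer_def)
qed

lemma elementary_abelian_2_group_if_generated_by_involutions:
  assumes "generate G S = carrier G" "S \<subseteq> carrier G"
    and "\<And>x y. \<lbrakk>x \<in> S; y \<in> S\<rbrakk> \<Longrightarrow> x \<otimes> y = y \<otimes> x"
    and "\<And>x. x \<in> S \<Longrightarrow> x \<otimes> x = \<one>"
  shows "elementary_abelian_2_group G"
proof -
  interpret comm_group G
    using comm_group_if_generated_by_commuting assms(1-3) .
  have "subgroup {g \<in> carrier G. g \<otimes> g = \<one>} G" (is "subgroup ?I G")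
  proof (rule subgroupI)
    show "inv g \<in> ?I" if "g \<in> ?I" for g
      using that by (simp flip: inv_mult)
    show "g \<otimes> h \<in> ?I" if "g \<in> ?I" "h \<in> ?I" for g h
      using that by (simp add: m_ac)
  qed auto
  moreover have "S \<subseteq> ?I"
    using assms(2,4) by auto
  ultimately have "generate G S \<subseteq> ?I"
    by (intro generate_subgroup_incl)
  then show ?thesis
    unfolding elementary_abelian_2_group_def using comm_group_axioms assms(1) by blast
qed

lemma klein_four_mult:
  assumes "klein_four_subgroup G {\<one>, p, q, s}"
  shows "p \<otimes> q = s"
proof -
  have H: "subgroup {\<one>, p, q, s} G" and card: "card {\<one>, p, q, s} = 4" and pp: "p \<otimes> p = \<one>"
    using assms unfolding klein_four_subgroup_def by auto
  have p: "p \<in> carrier G" and q: "q \<in> carrier G"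
    using subgroup.subset[OF H] by auto
  have "\<one> \<noteq> p" "\<one> \<noteq> q" "p \<noteq> q"
    using card by (auto simp: card_insert_if split: if_splits)
  then have "p \<otimes> q \<noteq> p \<otimes> p" "p \<otimes> q \<noteq> p" "p \<otimes> q \<noteq> q"
    using p q by simp_all
  moreover have "p \<otimes> q \<in> {\<one>, p, q, s}"
    using subgroup.m_closed[OF H] by simp
  ultimately show ?thesis
    using pp by auto
qed

lemma commute_if_grid_relations:
  assumes carrier: "x \<in> carrier G" "y \<in> carrier G" "a \<in> carrier G" "a' \<in> carrier G"
    and xa: "x \<otimes> a = a \<otimes> x" and xa': "x \<otimes> a' = a' \<otimes> x" and ya: "y \<otimes> a = a \<otimes> y"
    and "(x \<otimes> a') \<otimes> (a \<otimes> y) = (x \<otimes> a) \<otimes> (a' \<otimes> y)"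
    and "(x \<otimes> a) \<otimes> (a' \<otimes> y) = (a' \<otimes> y) \<otimes> (x \<otimes> a)"
  shows "x \<otimes> y = y \<otimes> x"
proof -
  have "x \<otimes> ((a' \<otimes> a) \<otimes> y) = x \<otimes> ((a \<otimes> a') \<otimes> y)"
    using assms(8) carrier by (simp add: m_assoc)
  then have aa': "a' \<otimes> a = a \<otimes> a'"
    using carrier by simp
  have "(a \<otimes> a') \<otimes> (x \<otimes> y) = a \<otimes> ((a' \<otimes> x) \<otimes> y)"
    using carrier by (simp add: m_assoc)
  also have "\<dots> = (a \<otimes> x) \<otimes> (a' \<otimes> y)"
    using carrier by (simp add: m_assoc flip: xa')
  also have "\<dots> = (a' \<otimes> y) \<otimes> (x \<otimes> a)"
    using assms(9) by (simp add: xa)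
  also have "\<dots> = a' \<otimes> ((y \<otimes> a) \<otimes> x)"
    using carrier by (simp add: m_assoc xa)
  also have "\<dots> = (a \<otimes> a') \<otimes> (y \<otimes> x)"
    using carrier by (simp add: ya m_assoc flip: aa')
  finally show ?thesis
    using carrier by simp
qed

end

locale quadrangle_2t =
  fixes P :: "'p set" and L :: "'p set set" and t :: nat
  assumes gen_quadrangle: "gen_quadrangle_2t P L t"
begin

abbreviation collinear :: "'p \<Rightarrow> 'p \<Rightarrow> bool" where
  "collinear x y \<equiv> collinear_pts L x y"

lemma line_subset: "l \<in> L \<Longrightarrow> l \<subseteq> P"
  and line_card: "l \<in> L \<Longrightarrow> card l = 3"
  using gen_quadrangle unfolding gen_quadrangle_2t_def by simp_all

lemma line_unique:
  assumes "l \<in> L" "m \<in> L" "x \<noteq> y" "x \<in> l" "y \<in> l" "x \<in> m" "y \<in> m"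
  shows "l = m"
proof -
  have "x \<in> P" "y \<in> P"
    using assms(1,4,5) line_subset by auto
  then show ?thesis
    using gen_quadrangle assms unfolding gen_quadrangle_2t_def by simp
qed

lemma card_lines_through: "x \<in> P \<Longrightarrow> card {l\<in>L. x \<in> l} = t + 1"
  and finite_lines_through: "x \<in> P \<Longrightarrow> finite {l\<in>L. x \<in> l}"
  using gen_quadrangle unfolding gen_quadrangle_2t_def by simp_all

lemma ex1_collinear_on_line:
  assumes "p \<in> P" "l \<in> L" "p \<notin> l"
  shows "\<exists>!y. y \<in> l \<and> collinear p y"
  using gen_quadrangle assms unfolding gen_quadrangle_2t_def by simp

lemma collinearI: "\<lbrakk>l \<in> L; x \<in> l; y \<in> l\<rbrakk> \<Longrightarrow> collinear x y"
  unfolding collinear_pts_def by blast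

lemma collinearE:
  assumes "collinear x y" obtains l where "l \<in> L" "x \<in> l" "y \<in> l"
  using assms unfolding collinear_pts_def by blast

lemma collinear_sym: "collinear x y \<Longrightarrow> collinear y x"
  unfolding collinear_pts_def by blast

lemma collinear_in_points: "collinear x y \<Longrightarrow> x \<in> P"
  using line_subset by (auto elim: collinearE)

lemma line_distinct: "{x, y, z} \<in> L \<Longrightarrow> x \<noteq> y \<and> x \<noteq> z \<and> y \<noteq> z"
  using line_card by (fastforce simp: card_insert_if split: if_splits)

lemma line_through:
  assumes "x \<in> P" obtains l where "l \<in> L" "x \<in> l"
proof -
  have "0 < card {l\<in>L. x \<in> l}"
    using card_lines_through[OF assms] by simp
  then show thesis
    using that by (auto simp: card_gt_0_iff)
qed

lemma line_eq_third_point: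
  assumes "l \<in> L" "x \<in> l" "y \<in> l" "x \<noteq> y"
  obtains z where "l = {x, y, z}"
proof -
  have "card (l - {x, y}) = 1"
    using line_card[OF assms(1)] assms(2-4) by (simp add: card_Diff_subset)
  then obtain z where "l - {x, y} = {z}" by (meson card_1_singletonE)
  then show thesis using that assms(2,3) by blast
qed

lemma collinear_line:
  assumes "collinear x y" "x \<noteq> y" obtains z where "{x, y, z} \<in> L"
  using assms line_eq_third_point by (metis collinearE)

lemma no_triangle:
  assumes "l \<in> L" "p \<notin> l" "u \<in> l" "v \<in> l" "collinear p u" "collinear p v"
  shows "u = v"
  using ex1_collinear_on_line[OF collinear_in_points[OF assms(5)] assms(1,2)] assms(3-6) by blast

lemma collinear_third_point:
  assumes "{u, v, w} \<in> L" "p \<in> P" "\<not> collinear p u" "\<not> collinear p v"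
  shows "collinear p w"
proof -
  have "p \<notin> {u, v, w}"
    using assms(1,3,4) collinearI by blast
  then show ?thesis
    using ex1_collinear_on_line[OF assms(2,1)] assms(3,4) by blast
qed

lemma second_line_through:
  assumes "l \<in> L" "m \<in> L" "l \<noteq> m" "a \<in> l \<inter> m" "x \<in> P" "k \<in> L"
  obtains k' where "k' \<in> L" "x \<in> k'" "k' \<noteq> k"
proof -
  have "a \<in> P"
    using assms(1,4) line_subset by auto
  have "card {l, m} \<le> card {l\<in>L. a \<in> l}"
    using assms(1,2,4) finite_lines_through[OF \<open>a \<in> P\<close>] by (intro card_mono) auto
  then have "card {k} < card {l\<in>L. x \<in> l}"
    using assms(3,5) card_lines_through \<open>a \<in> P\<close> by simp
  then have "\<not> {l\<in>L. x \<in> l} \<subseteq> {k}"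
    using card_mono[of "{k}" "{l\<in>L. x \<in> l}"] by auto
  then show thesis
    using that by blast
qed

lemma line_through_towards:
  assumes "l \<in> L" "x \<in> l" "y \<in> P" "\<not> collinear x y"
  obtains a b e where "l = {x, a, b}" "{y, a, e} \<in> L"
proof -
  have "y \<notin> l"
    using assms(1,2,4) collinearI by blast
  then obtain a where a: "a \<in> l" "collinear y a"
    using ex1_collinear_on_line[OF assms(3,1)] by blast
  have "a \<noteq> x"
    using a(2) assms(4) collinear_sym by blast
  then obtain b where "l = {x, a, b}"
    using a(1) assms(1,2) line_eq_third_point by metis
  moreover have "y \<noteq> a"
    using a(1) \<open>y \<notin> l\<close> by blast
  then obtain e where "{y, a, e} \<in> L"
    using a(2) collinear_line by metis
  ultimately show thesis by (rule that)
qed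

lemma far_corner_collinear:
  assumes "\<not> collinear x y"
    and l: "{x, a, b} \<in> L" and l': "{x, a', b'} \<in> L" and "{x, a, b} \<noteq> {x, a', b'}"
    and m: "{y, a, e} \<in> L" and m': "{y, a', e'} \<in> L"
  shows "collinear b' e" "b' \<noteq> e"
proof -
  have "y \<notin> {x, a', b'}"
    using assms(1) l' collinearI by blast
  then have "\<not> collinear b' y"
    using no_triangle[OF l', of y a' b'] line_distinct[OF l'] collinearI[OF m'] collinear_sym
    by blast
  have "a \<noteq> x"
    using assms(1) m collinearI by blast
  then have "a \<notin> {x, a', b'}"
    using line_unique[OF l l', of x a] assms(4) by blast
  then have "\<not> collinear b' a"
    using no_triangle[OF l', of a x b'] line_distinct[OF l'] collinearI[OF l] collinear_sym
    by blast
  moreover have "b' \<in> P"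
    using line_subset[OF l'] by blast
  ultimately show "collinear b' e" "b' \<noteq> e"
    using collinear_third_point[OF m] collinearI[OF m] \<open>\<not> collinear b' y\<close> by blast+
qed

lemma near_corner_collinear:
  assumes "\<not> collinear x y"
    and l: "{x, a, b} \<in> L" and l': "{x, a', b'} \<in> L" and "{x, a, b} \<noteq> {x, a', b'}"
    and m: "{y, a, e} \<in> L" and n: "{b', e, z} \<in> L"
  shows "collinear b z" "b \<noteq> z"
proof -
  have "b \<notin> {x, a', b'}"
    using line_unique[OF l l', of x b] line_distinct[OF l] assms(4) by blast
  then have "\<not> collinear b b'"
    using no_triangle[OF l', of b x b'] line_distinct[OF l'] collinearI[OF l] by blast
  have "y \<notin> {x, a, b}"
    using assms(1) l collinearI by blast
  then have "e \<notin> {x, a, b}"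
    using line_unique[OF l m, of a e] line_distinct[OF m] by blast
  then have "\<not> collinear b e"
    using no_triangle[OF l, of e a b] line_distinct[OF l] collinearI[OF m] collinear_sym by blast
  moreover have "b \<in> P"
    using line_subset[OF l] by blast
  ultimately show "collinear b z" "b \<noteq> z"
    using collinear_third_point[OF n] collinearI[OF n] \<open>\<not> collinear b b'\<close> by blast+
qed

lemma grid_through_noncollinear:
  assumes "x \<in> P" "y \<in> P" "\<not> collinear x y"
  obtains a a' b b' e e' z where
    "{x, a, b} \<in> L" "{x, a', b'} \<in> L" "{y, a, e} \<in> L" "{y, a', e'} \<in> L"
    "{b', e, z} \<in> L" "{b, e', z} \<in> L"
proof -
  obtain l where "l \<in> L" "x \<in> l"
    using line_through[OF assms(1)] .
  then obtain a b e where "l = {x, a, b}" and m: "{y, a, e} \<in> L"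
    using line_through_towards[OF _ _ assms(2,3)] by blast
  with \<open>l \<in> L\<close> have l: "{x, a, b} \<in> L" by simp
  have "{x, a, b} \<noteq> {y, a, e}"
    using assms(3) l collinearI by blast
  moreover have "a \<in> {x, a, b} \<inter> {y, a, e}"
    by simp
  ultimately obtain l' where "l' \<in> L" "x \<in> l'" "l' \<noteq> {x, a, b}"
    using second_line_through[OF l m _ _ assms(1) l] by blast
  then obtain a' b' e' where "l' = {x, a', b'}" and m': "{y, a', e'} \<in> L"
    using line_through_towards[OF _ _ assms(2,3)] by blast
  with \<open>l' \<in> L\<close> \<open>l' \<noteq> {x, a, b}\<close> have l': "{x, a', b'} \<in> L" and ll': "{x, a, b} \<noteq> {x, a', b'}"
    by auto
  have "a \<noteq> a'"
    using line_unique[OF l l', of x a] line_distinct[OF l] ll' by blast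
  moreover have "x \<notin> {y, a, e}"
    using assms(3) m collinearI by blast
  ultimately have mm': "{y, a', e'} \<noteq> {y, a, e}"
    using no_triangle[OF m, of x a a'] collinearI[OF l] collinearI[OF l'] by blast
  from far_corner_collinear[OF assms(3) l l' ll' m m']
  obtain z where n: "{b', e, z} \<in> L"
    by (rule collinear_line)
  note be' = far_corner_collinear[OF assms(3) l' l ll'[symmetric] m' m]
  then obtain w where k: "{b, e', w} \<in> L"
    by (rule collinear_line)
  have "\<not> collinear y x" "{e, b', z} \<in> L"
    using assms(3) n collinear_sym by (auto simp: insert_commute)
  note e'z = near_corner_collinear[OF this(1) m' m mm' l' this(2)]
  note bz = near_corner_collinear[OF assms(3) l l' ll' m n]
  have "z \<in> {b, e', w}"
    using no_triangle[OF k, of z b e'] e'z(1) bz(1) be'(2) collinear_sym by blast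
  then have "{b, e', z} \<in> L"
    using k bz(2) e'z(2) by auto
  then show thesis
    using that l l' m m' n by blast
qed

end

locale gq_representation = quadrangle_2t P L t + group R
  for P :: "'p set" and L :: "'p set set" and t :: nat
    and R :: "('g, 'b) monoid_scheme" (structure) +
  fixes r :: "'p \<Rightarrow> 'g"
  assumes representation: "representation P L R r"
begin

lemma rep_carrier: "x \<in> P \<Longrightarrow> r x \<in> carrier R"
  and rep_ord: "x \<in> P \<Longrightarrow> ord (r x) = 2"
  and rep_generate: "generate R (r ` P) = carrier R"
  and rep_klein_four: "{x, y, z} \<in> L \<Longrightarrow> klein_four_subgroup R {\<one>, r x, r y, r z}"
  using representation unfolding representation_def by auto

lemma rep_square:
  assumes "x \<in> P" shows "r x \<otimes> r x = \<one>"
  using pow_ord_eq_1[OF rep_carrier[OF assms]] rep_carrier[OF assms] rep_ord[OF assms]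
  by (simp add: numeral_2_eq_2)

lemma rep_line_mult: "{x, y, z} \<in> L \<Longrightarrow> r x \<otimes> r y = r z"
  using klein_four_mult rep_klein_four by blast

lemma rep_line_commute:
  assumes "{x, y, z} \<in> L" shows "r x \<otimes> r y = r y \<otimes> r x"
proof -
  have "{y, x, z} \<in> L"
    using assms by (simp add: insert_commute)
  then show ?thesis
    using rep_line_mult assms by simp
qed

lemma rep_commute:
  assumes "x \<in> P" "y \<in> P" shows "r x \<otimes> r y = r y \<otimes> r x"
proof (cases "collinear x y")
  case True
  show ?thesis
  proof (cases "x = y")
    case False
    with True obtain z where "{x, y, z} \<in> L"
      by (rule collinear_line)
    then show ?thesis
      by (rule rep_line_commute)
  qed simp
next
  case False
  then obtain a a' b b' e e' z where
    l: "{x, a, b} \<in> L" and l': "{x, a', b'} \<in> L" and m: "{y, a, e} \<in> L" and m': "{y, a', e'} \<in> L"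
    and n: "{b', e, z} \<in> L" and k: "{b, e', z} \<in> L"
    by (rule grid_through_noncollinear[OF assms])
  have "{a, y, e} \<in> L" "{a', y, e'} \<in> L"
    using m m' by (simp_all add: insert_commute)
  note products = rep_line_mult[OF l] rep_line_mult[OF l'] rep_line_mult[OF this(1)]
    rep_line_mult[OF this(2)] rep_line_mult[OF n] rep_line_mult[OF k]
  show ?thesis
  proof (rule commute_if_grid_relations)
    show "r x \<in> carrier R" "r y \<in> carrier R" "r a \<in> carrier R" "r a' \<in> carrier R"
      using assms l l' line_subset by (auto intro: rep_carrier)
    show "r x \<otimes> r a = r a \<otimes> r x" "r x \<otimes> r a' = r a' \<otimes> r x" "r y \<otimes> r a = r a \<otimes> r y"
      using l l' m by (blast intro: rep_line_commute)+
    show "(r x \<otimes> r a') \<otimes> (r a \<otimes> r y) = (r x \<otimes> r a) \<otimes> (r a' \<otimes> r y)"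
      "(r x \<otimes> r a) \<otimes> (r a' \<otimes> r y) = (r a' \<otimes> r y) \<otimes> (r x \<otimes> r a)"
      using products rep_line_commute[OF k] by simp_all
  qed
qed

lemma elementary_abelian: "elementary_abelian_2_group R"
  using rep_generate rep_carrier rep_square rep_commute
  by (intro elementary_abelian_2_group_if_generated_by_involutions) auto

end

theorem proposition3p1:
  fixes P :: "'p set" and L :: "'p set set" and t :: nat
    and R :: "('g, 'b) monoid_scheme" and r :: "'p \<Rightarrow> 'g"
  assumes "gen_quadrangle_2t P L t"
    and "representation P L R r"
  shows "elementary_abelian_2_group R"
proof -
  have "group R"
    using assms(2) unfolding representation_def by blast
  then interpret gq_representation P L t R r
    using assms by (intro gq_representation.intro quadrangle_2t.intro gq_representation_axioms.intro)
  show ?thesis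
    by (rule elementary_abelian)
qed

end
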